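(* Let $\Omega$ be a finite set with at least two points, $\delta>0$, and $\rho(x,y)=\delta\,1_{\{x\neq y\}}$. Let $r\ge1$, $n\ge1$. (i) For every probability measure $P$ on $\Omega$, if $\hat P$ is the empirical distribution of $n$ i.i.d. samples from $P$, then $\mathbb E[W_r^r(P,\hat P)]\le\delta^r\sqrt{(|\Omega|-1)/n}$. (ii) If $|\Omega|\le 32n$, then $\inf_{\hat P}\sup_{P}\mathbb E[W_r^r(P,\hat P)]\ge c_r\,\delta^r\sqrt{(|\Omega|-1)/n}$ with $c_r=\frac{3\log2}{2^{r+12}}$, where the supremum is over all probability measures on $\Omega$ and the infimum over all (possibly randomized) estimators $\hat P:\Omega^n\to\{\text{probability measures on }\Omega\}$.
   Context: $W_r(P,Q):=\inf_{\mu\in\Pi(P,Q)}\big(\mathbb E_{(X,Y)\sim\mu}[\rho^r(X,Y)]\big)^{1/r}$ with $\Pi(P,Q)$ the set of couplings. The empirical distribution is $\hat P(S)=\frac1n\sum_{i=1}^n1_{\{X_i\in S\}}$. *)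

theory Defs
  imports "HOL-Probability.Probability"
begin

definition couplings :: "'a pmf \<Rightarrow> 'b pmf \<Rightarrow> ('a \<times> 'b) pmf set" where
  "couplings P Q = {\<mu>. map_pmf fst \<mu> = P \<and> map_pmf snd \<mu> = Q}"

definition wasserstein :: "('a \<Rightarrow> 'a \<Rightarrow> real) \<Rightarrow> real \<Rightarrow> 'a pmf \<Rightarrow> 'a pmf \<Rightarrow> real" where
  "wasserstein \<rho> r P Q =
     (INF \<mu> \<in> couplings P Q. measure_pmf.expectation \<mu> (\<lambda>(x, y). \<rho> x y powr r)) powr (1 / r)"

definition hamming_metric :: "real \<Rightarrow> 'a \<Rightarrow> 'a \<Rightarrow> real" where
  "hamming_metric \<delta> x y = (if x \<noteq> y then \<delta> else 0)"

definition empirical :: "'a list \<Rightarrow> 'a pmf" where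
  "empirical xs = map_pmf (\<lambda>i. xs ! i) (pmf_of_set {..<length xs})"

definition risk :: "('a \<Rightarrow> 'a \<Rightarrow> real) \<Rightarrow> real \<Rightarrow> nat \<Rightarrow> ('a list \<Rightarrow> 'a pmf pmf) \<Rightarrow> 'a pmf \<Rightarrow> real" where
  "risk \<rho> r n est P =
     measure_pmf.expectation (replicate_pmf n P)
       (\<lambda>xs. measure_pmf.expectation (est xs) (\<lambda>Q. wasserstein \<rho> r P Q powr r))"

end

(*
  For the cost delta * 1{x ~= y} the maximal coupling, which leaves the common mass min P Q on
  the diagonal, shows W_r(P, Q)^r = delta^r * TV(P, Q).

  Upper bound: with counts N_a of the sample, 2 n TV(P, P_n) = sum_a |N_a - n P(a)|, and
  E |N_a - n P(a)| <= sqrt (Var N_a) <= sqrt (n P(a)); Cauchy-Schwarz over the k points gives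
  E TV(P, P_n) <= sqrt (k / (4 n)) <= sqrt ((k - 1) / n).

  Lower bound (Assouad): group 2 m points into m pairs, m = k div 2, and for S a subset of
  {..<m} let P_S give mass (1 + eps) / (2 m) to one point of pair j and (1 - eps) / (2 m) to the
  other, according to whether j is in S. The TV distance from any estimate to P_S splits into
  per-pair losses whose values for the two choices of bit j add up to at least eps / m, while
  the n-fold products of neighbouring P_S have Bhattacharyya affinity at least
  (1 - eps^2 / m)^n and hence overlap at least (1 - n eps^2 / m)^2 / 2. For eps^2 = m / (16 n)
  the average risk of any estimator over the P_S is at least delta^r * 225 eps / 1024.
*)

theory Submission
  imports Defs
begin

section \<open>Wasserstein distance for the Hamming cost\<close>

lemma sum_pmf_UNIV [simp]: "(\<Sum>x\<in>UNIV. pmf p x) = (1::real)" for p :: "'a::finite pmf"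
  by (rule sum_pmf_eq_1) auto

lemma integrable_pmf_finite [simp]: "integrable (measure_pmf p) f"
  for p :: "'a::finite pmf" and f :: "'a \<Rightarrow> real"
  by (rule integrable_measure_pmf_finite) simp

lemma expectation_pmf_finite: "measure_pmf.expectation p f = (\<Sum>x\<in>UNIV. pmf p x * f x)"
  for p :: "'a::finite pmf" and f :: "'a \<Rightarrow> real"
  by (subst integral_measure_pmf_real[of UNIV]) (auto simp: mult.commute)

lemma pmf_map_fst_finite: "pmf (map_pmf fst \<mu>) x = (\<Sum>y\<in>UNIV. pmf \<mu> (x, y))"
  for \<mu> :: "('a \<times> 'b::finite) pmf"
proof -
  have "pmf (map_pmf fst \<mu>) x = measure_pmf.prob \<mu> (fst -` {x})"
    by (simp add: pmf_map)
  also have "fst -` {x} = Pair x ` UNIV" by auto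
  also have "measure_pmf.prob \<mu> (Pair x ` UNIV) = (\<Sum>y\<in>UNIV. pmf \<mu> (x, y))"
    by (simp add: measure_measure_pmf_finite sum.reindex inj_on_def)
  finally show ?thesis .
qed

lemma pmf_map_snd_finite: "pmf (map_pmf snd \<mu>) y = (\<Sum>x\<in>UNIV. pmf \<mu> (x, y))"
  for \<mu> :: "('a::finite \<times> 'b) pmf"
proof -
  have "pmf (map_pmf snd \<mu>) y = measure_pmf.prob \<mu> (snd -` {y})"
    by (simp add: pmf_map)
  also have "snd -` {y} = (\<lambda>x. (x, y)) ` UNIV" by auto
  also have "measure_pmf.prob \<mu> ((\<lambda>x. (x, y)) ` UNIV) = (\<Sum>x\<in>UNIV. pmf \<mu> (x, y))"
    by (simp add: measure_measure_pmf_finite sum.reindex inj_on_def)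
  finally show ?thesis .
qed

definition tv_dist :: "'a::finite pmf \<Rightarrow> 'a pmf \<Rightarrow> real" where
  "tv_dist p q = (\<Sum>x\<in>UNIV. \<bar>pmf p x - pmf q x\<bar>) / 2"

lemma tv_dist_nonneg: "0 \<le> tv_dist p q"
  by (simp add: tv_dist_def sum_nonneg)

lemma tv_dist_eq_sum_excess: "tv_dist p q = (\<Sum>x\<in>UNIV. pmf p x - min (pmf p x) (pmf q x))"
proof -
  have "(\<Sum>x\<in>UNIV. \<bar>pmf p x - pmf q x\<bar>)
      = (\<Sum>x\<in>UNIV. pmf p x - min (pmf p x) (pmf q x)) + (\<Sum>x\<in>UNIV. pmf q x - min (pmf p x) (pmf q x))"
    by (subst sum.distrib[symmetric]) (auto intro: sum.cong)
  moreover have "(\<Sum>x\<in>UNIV. pmf p x - min (pmf p x) (pmf q x)) = (\<Sum>x\<in>UNIV. pmf q x - min (pmf p x) (pmf q x))"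
    by (simp add: sum_subtractf)
  ultimately show ?thesis
    by (simp add: tv_dist_def)
qed

lemma tv_dist_eq_1_minus_overlap: "tv_dist p q = 1 - (\<Sum>x\<in>UNIV. min (pmf p x) (pmf q x))"
  by (simp add: tv_dist_eq_sum_excess sum_subtractf)

lemma tv_dist_le_1: "tv_dist p q \<le> 1"
  by (simp add: tv_dist_eq_1_minus_overlap sum_nonneg)

lemma tv_dist_commute: "tv_dist p q = tv_dist q p"
  by (simp add: tv_dist_def abs_minus_commute)

lemma coupling_diagonal_le_overlap:
  fixes p q :: "'a::finite pmf"
  assumes "\<mu> \<in> couplings p q"
  shows "(\<Sum>x\<in>UNIV. pmf \<mu> (x, x)) \<le> (\<Sum>x\<in>UNIV. min (pmf p x) (pmf q x))"
proof (rule sum_mono)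
  fix x
  have "pmf \<mu> (x, x) \<le> pmf (map_pmf fst \<mu>) x" "pmf \<mu> (x, x) \<le> pmf (map_pmf snd \<mu>) x"
    unfolding pmf_map_fst_finite pmf_map_snd_finite
    by (auto intro: member_le_sum[where f = "\<lambda>y. pmf \<mu> (x, y)"] member_le_sum[where f = "\<lambda>y. pmf \<mu> (y, x)"])
  with assms show "pmf \<mu> (x, x) \<le> min (pmf p x) (pmf q x)"
    by (simp add: couplings_def)
qed

text \<open>The maximal coupling keeps the common mass \<open>min p q\<close> on the diagonal and spreads the
  rest as the product of the excesses \<open>p - min p q\<close> and \<open>q - min p q\<close>, both of total mass
  \<open>tv_dist p q\<close>. If \<open>tv_dist p q = 0\<close> the excesses vanish, so the junk value of \<open>x / 0\<close>
  does no harm.\<close>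
definition maximal_coupling_weight :: "'a::finite pmf \<Rightarrow> 'a pmf \<Rightarrow> 'a \<times> 'a \<Rightarrow> real" where
  "maximal_coupling_weight p q = (\<lambda>(x, y).
     (if x = y then min (pmf p x) (pmf q x) else 0)
     + (pmf p x - min (pmf p x) (pmf q x)) * (pmf q y - min (pmf p y) (pmf q y)) / tv_dist p q)"

lemma maximal_coupling_weight_nonneg: "0 \<le> maximal_coupling_weight p q z"
  using tv_dist_nonneg[of p q] by (auto simp: maximal_coupling_weight_def split: prod.split)

lemma maximal_coupling_weight_marginals:
  "(\<Sum>y\<in>UNIV. maximal_coupling_weight p q (x, y)) = pmf p x"
  "(\<Sum>x\<in>UNIV. maximal_coupling_weight p q (x, y)) = pmf q y"
proof -
  define m where "m x = min (pmf p x) (pmf q x)" for x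
  have weight: "maximal_coupling_weight p q (x, y)
      = (if x = y then m x else 0) + (pmf p x - m x) * (pmf q y - m y) / tv_dist p q" for x y
    by (simp add: maximal_coupling_weight_def m_def)
  have excess: "(\<Sum>x\<in>UNIV. pmf p x - m x) = tv_dist p q" "(\<Sum>x\<in>UNIV. pmf q x - m x) = tv_dist p q"
    using tv_dist_eq_sum_excess[of p q] tv_dist_eq_sum_excess[of q p]
    by (simp_all add: m_def tv_dist_commute min.commute)
  have "0 \<le> pmf p x - m x" "0 \<le> pmf q x - m x" for x
    by (auto simp: m_def)
  then have excess_zero: "pmf p x - m x = 0" "pmf q x - m x = 0" if "tv_dist p q = 0" for x
    using excess that by (simp_all add: sum_nonneg_eq_0_iff)
  have "(\<Sum>y\<in>UNIV. maximal_coupling_weight p q (x, y)) = m x + (pmf p x - m x) * tv_dist p q / tv_dist p q"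
    by (simp add: weight sum.distrib excess flip: sum_divide_distrib sum_distrib_left)
  then show "(\<Sum>y\<in>UNIV. maximal_coupling_weight p q (x, y)) = pmf p x"
    using excess_zero[of x] by (cases "tv_dist p q = 0") auto
  have "(\<Sum>x\<in>UNIV. maximal_coupling_weight p q (x, y)) = m y + tv_dist p q * (pmf q y - m y) / tv_dist p q"
    by (simp add: weight sum.distrib excess flip: sum_divide_distrib sum_distrib_right)
  then show "(\<Sum>x\<in>UNIV. maximal_coupling_weight p q (x, y)) = pmf q y"
    using excess_zero[of y] by (cases "tv_dist p q = 0") auto
qed

definition maximal_coupling :: "'a::finite pmf \<Rightarrow> 'a pmf \<Rightarrow> ('a \<times> 'a) pmf" where
  "maximal_coupling p q = embed_pmf (maximal_coupling_weight p q)"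

lemma pmf_maximal_coupling: "pmf (maximal_coupling p q) = maximal_coupling_weight p q"
proof
  fix z
  have "(\<Sum>z\<in>UNIV. maximal_coupling_weight p q z) = (\<Sum>x\<in>UNIV. \<Sum>y\<in>UNIV. maximal_coupling_weight p q (x, y))"
    by (simp add: sum.cartesian_product flip: UNIV_Times_UNIV)
  also have "\<dots> = 1"
    by (simp add: maximal_coupling_weight_marginals)
  finally show "pmf (maximal_coupling p q) z = maximal_coupling_weight p q z"
    unfolding maximal_coupling_def using maximal_coupling_weight_nonneg[of p q]
    by (intro pmf_embed_pmf) (simp_all add: nn_integral_count_space_finite)
qed

lemma maximal_coupling_in_couplings: "maximal_coupling p q \<in> couplings p q"
  by (auto simp: couplings_def pmf_map_fst_finite pmf_map_snd_finite pmf_maximal_coupling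
      maximal_coupling_weight_marginals intro!: pmf_eqI)

lemma maximal_coupling_diagonal:
  "(\<Sum>x\<in>UNIV. pmf (maximal_coupling p q) (x, x)) = (\<Sum>x\<in>UNIV. min (pmf p x) (pmf q x))"
  by (intro sum.cong) (auto simp: pmf_maximal_coupling maximal_coupling_weight_def min_def)

lemma expectation_hamming_cost:
  fixes \<mu> :: "('a::finite \<times> 'a) pmf"
  shows "measure_pmf.expectation \<mu> (\<lambda>(x, y). hamming_metric \<delta> x y powr r)
           = \<delta> powr r * (1 - (\<Sum>x\<in>UNIV. pmf \<mu> (x, x)))"
proof -
  have diagonal: "(\<Sum>z\<in>UNIV. if fst z = snd z then pmf \<mu> z else 0) = (\<Sum>x\<in>UNIV. pmf \<mu> (x, x))"
    by (subst sum.mono_neutral_cong_right[where S = "range (\<lambda>x. (x, x))"])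
       (auto simp: sum.reindex inj_on_def)
  have "measure_pmf.expectation \<mu> (\<lambda>(x, y). hamming_metric \<delta> x y powr r)
      = (\<Sum>z\<in>UNIV. \<delta> powr r * pmf \<mu> z - \<delta> powr r * (if fst z = snd z then pmf \<mu> z else 0))"
    by (auto simp: expectation_pmf_finite hamming_metric_def intro!: sum.cong)
  also have "\<dots> = \<delta> powr r * (1 - (\<Sum>x\<in>UNIV. pmf \<mu> (x, x)))"
    by (simp add: sum_subtractf right_diff_distrib diagonal flip: sum_distrib_left)
  finally show ?thesis .
qed

lemma wasserstein_hamming_powr:
  fixes p q :: "'a::finite pmf"
  assumes "0 \<le> \<delta>" "0 < r"
  shows "wasserstein (hamming_metric \<delta>) r p q powr r = \<delta> powr r * tv_dist p q"
proof -
  let ?cost = "\<lambda>\<mu>. measure_pmf.expectation \<mu> (\<lambda>(x, y). hamming_metric \<delta> x y powr r)"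
  have "?cost \<mu> \<ge> \<delta> powr r * tv_dist p q" if "\<mu> \<in> couplings p q" for \<mu>
    using coupling_diagonal_le_overlap[OF that]
    by (simp add: expectation_hamming_cost tv_dist_eq_1_minus_overlap mult_left_mono)
  moreover have "?cost (maximal_coupling p q) = \<delta> powr r * tv_dist p q"
    by (simp add: expectation_hamming_cost maximal_coupling_diagonal tv_dist_eq_1_minus_overlap)
  ultimately have "(INF \<mu> \<in> couplings p q. ?cost \<mu>) = \<delta> powr r * tv_dist p q"
    using maximal_coupling_in_couplings[of p q]
    by (intro antisym cINF_greatest) (auto intro!: cINF_lower2 bdd_belowI2)
  then show ?thesis
    using assms tv_dist_nonneg[of p q] by (simp add: wasserstein_def powr_powr)
qed

section \<open>Moments of i.i.d. samples\<close>

lemma finite_lists_length: "finite {xs :: 'a::finite list. length xs = n}"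
  using finite_lists_length_eq[of "UNIV :: 'a set" n] by simp

lemma sum_lists_length_Suc:
  fixes g :: "'a::finite list \<Rightarrow> 'b::comm_monoid_add"
  shows "(\<Sum>xs | length xs = Suc n. g xs) = (\<Sum>x\<in>UNIV. \<Sum>xs | length xs = n. g (x # xs))"
proof -
  have "bij_betw (\<lambda>(x, xs). x # xs) (UNIV \<times> {xs. length xs = n}) {xs. length xs = Suc n}"
    by (auto simp: bij_betw_def inj_on_def length_Suc_conv)
  then have "(\<Sum>xs | length xs = Suc n. g xs) = (\<Sum>(x, xs)\<in>UNIV \<times> {xs. length xs = n}. g (x # xs))"
    by (subst sum.reindex_bij_betw[symmetric]) (auto simp: case_prod_unfold)
  then show ?thesis
    by (simp add: sum.cartesian_product)
qed

lemma pmf_replicate_pmf_Cons: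
  "pmf (replicate_pmf (Suc n) p) (x # xs) = pmf p x * pmf (replicate_pmf n p) xs"
proof -
  have "replicate_pmf (Suc n) p = map_pmf (\<lambda>(x, xs). x # xs) (pair_pmf p (replicate_pmf n p))"
    by (simp add: pair_pmf_def map_pmf_def bind_assoc_pmf bind_return_pmf)
  moreover have "inj (\<lambda>(x :: 'a, xs). x # xs)"
    by (auto simp: inj_def)
  ultimately show ?thesis
    using pmf_map_inj'[of "\<lambda>(x, xs). x # xs" "pair_pmf p (replicate_pmf n p)" "(x, xs)"]
    by (simp add: pmf_pair)
qed

lemma integrable_replicate_pmf_finite [simp]: "integrable (measure_pmf (replicate_pmf n p)) f"
  for p :: "'a::finite pmf" and f :: "'a list \<Rightarrow> real"
  by (rule integrable_measure_pmf_finite)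
     (auto simp: set_replicate_pmf intro: finite_subset[OF _ finite_lists_length])

lemma expectation_replicate_pmf_finite:
  fixes p :: "'a::finite pmf" and f :: "'a list \<Rightarrow> real"
  shows "measure_pmf.expectation (replicate_pmf n p) f
           = (\<Sum>xs | length xs = n. pmf (replicate_pmf n p) xs * f xs)"
  by (subst integral_measure_pmf_real[OF finite_lists_length])
     (auto simp: set_replicate_pmf mult.commute)

lemma expectation_replicate_pmf_Suc:
  fixes p :: "'a::finite pmf" and f :: "'a list \<Rightarrow> real"
  shows "measure_pmf.expectation (replicate_pmf (Suc n) p) f
           = measure_pmf.expectation p (\<lambda>x. measure_pmf.expectation (replicate_pmf n p) (\<lambda>xs. f (x # xs)))"
  by (simp add: expectation_replicate_pmf_finite expectation_pmf_finite sum_lists_length_Suc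
      pmf_replicate_pmf_Cons sum_distrib_left mult.assoc del: replicate_pmf.simps)

lemma expectation_sum_list_iid:
  fixes p :: "'a::finite pmf" and g :: "'a \<Rightarrow> real"
  assumes "measure_pmf.expectation p g = 0"
  shows "measure_pmf.expectation (replicate_pmf n p) (\<lambda>xs. sum_list (map g xs)) = 0"
  by (induction n) (simp, simp add: expectation_replicate_pmf_Suc assms del: replicate_pmf.simps)

lemma expectation_sum_list_iid_squared:
  fixes p :: "'a::finite pmf" and g :: "'a \<Rightarrow> real"
  assumes "measure_pmf.expectation p g = 0"
  shows "measure_pmf.expectation (replicate_pmf n p) (\<lambda>xs. (sum_list (map g xs))\<^sup>2)
           = n * measure_pmf.expectation p (\<lambda>x. (g x)\<^sup>2)"
proof (induction n)
  case (Suc n)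
  have "measure_pmf.expectation (replicate_pmf n p) (\<lambda>xs. (g x + sum_list (map g xs))\<^sup>2)
      = (g x)\<^sup>2 + n * measure_pmf.expectation p (\<lambda>x. (g x)\<^sup>2)" for x
    using Suc expectation_sum_list_iid[OF assms, of n] by (simp add: power2_sum)
  then show ?case
    by (simp add: expectation_replicate_pmf_Suc algebra_simps del: replicate_pmf.simps)
qed simp

section \<open>Upper bound for the empirical distribution\<close>

lemma pmf_empirical:
  assumes "xs \<noteq> []"
  shows "pmf (empirical xs) a = count_list xs a / length xs"
proof -
  have "pmf (empirical xs) a = measure_pmf.prob (pmf_of_set {..<length xs}) ((\<lambda>i. xs ! i) -` {a})"
    by (simp add: empirical_def pmf_map)
  also have "\<dots> = card {i. i < length xs \<and> xs ! i = a} / length xs"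
    using assms by (subst measure_pmf_of_set) (auto simp: Int_def)
  finally show ?thesis
    by (simp add: count_list_eq_length_filter length_filter_conv_card eq_commute)
qed

lemma count_list_deviation_eq_sum_list:
  "real (count_list xs a) - length xs * (c :: real) = sum_list (map (\<lambda>x. (if x = a then 1 else 0) - c) xs)"
  by (induction xs) (auto simp: algebra_simps)

lemma expectation_abs_le_sqrt_second_moment:
  fixes M :: "'a pmf" and f :: "'a \<Rightarrow> real"
  assumes "integrable M f" "integrable M (\<lambda>x. (f x)\<^sup>2)"
  shows "measure_pmf.expectation M (\<lambda>x. \<bar>f x\<bar>) \<le> sqrt (measure_pmf.expectation M (\<lambda>x. (f x)\<^sup>2))"
proof (rule real_le_rsqrt)
  have "0 \<le> measure_pmf.variance M (\<lambda>x. \<bar>f x\<bar>)"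
    by (rule measure_pmf.variance_positive)
  with assms show "(measure_pmf.expectation M (\<lambda>x. \<bar>f x\<bar>))\<^sup>2 \<le> measure_pmf.expectation M (\<lambda>x. (f x)\<^sup>2)"
    by (subst (asm) measure_pmf.variance_eq) auto
qed

lemma expectation_abs_count_deviation_le:
  fixes p :: "'a::finite pmf"
  shows "measure_pmf.expectation (replicate_pmf n p) (\<lambda>xs. \<bar>real (count_list xs a) - n * pmf p a\<bar>)
           \<le> sqrt (n * pmf p a)"
proof -
  define g where "g = (\<lambda>x. (if x = a then 1 else 0) - pmf p a)"
  have deviation: "real (count_list xs a) - n * pmf p a = sum_list (map g xs)"
    if "xs \<in> set_pmf (replicate_pmf n p)" for xs
    using that count_list_deviation_eq_sum_list[of xs a "pmf p a"]
    by (simp add: g_def set_replicate_pmf)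
  have indicator: "(\<Sum>x\<in>UNIV. pmf p x * (if x = a then c else 0)) = pmf p a * c" for c
    by (simp add: if_distrib[where f = "\<lambda>t. _ * t"] cong: if_cong)
  have "measure_pmf.expectation p g = 0"
    by (simp add: g_def expectation_pmf_finite right_diff_distrib sum_subtractf indicator
        flip: sum_distrib_right)
  moreover have "measure_pmf.expectation p (\<lambda>x. (g x)\<^sup>2) \<le> pmf p a"
  proof -
    have "(g x)\<^sup>2 = (if x = a then 1 - 2 * pmf p a else 0) + (pmf p a)\<^sup>2" for x
      by (simp add: g_def power2_eq_square algebra_simps)
    then have "measure_pmf.expectation p (\<lambda>x. (g x)\<^sup>2) = pmf p a - (pmf p a)\<^sup>2"
      by (simp add: expectation_pmf_finite sum.distrib indicator algebra_simps
          power2_eq_square flip: sum_distrib_right)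
    then show ?thesis by simp
  qed
  ultimately have "measure_pmf.expectation (replicate_pmf n p) (\<lambda>xs. (sum_list (map g xs))\<^sup>2) \<le> n * pmf p a"
    by (simp add: expectation_sum_list_iid_squared mult_left_mono)
  moreover have "measure_pmf.expectation (replicate_pmf n p) (\<lambda>xs. \<bar>real (count_list xs a) - n * pmf p a\<bar>)
      = measure_pmf.expectation (replicate_pmf n p) (\<lambda>xs. \<bar>sum_list (map g xs)\<bar>)"
    using deviation by (intro integral_cong_AE AE_pmfI) auto
  ultimately show ?thesis
    using expectation_abs_le_sqrt_second_moment[of "replicate_pmf n p" "\<lambda>xs. sum_list (map g xs)"]
    by (simp del: replicate_pmf.simps) (meson order_trans real_sqrt_le_mono)
qed

lemma sum_sqrt_le_sqrt_card_mult_sum: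
  fixes f :: "'a \<Rightarrow> real"
  assumes "\<And>i. i \<in> A \<Longrightarrow> 0 \<le> f i"
  shows "(\<Sum>i\<in>A. sqrt (f i)) \<le> sqrt (card A * (\<Sum>i\<in>A. f i))"
proof (rule real_le_rsqrt)
  have "(\<Sum>i\<in>A. 1 * sqrt (f i))\<^sup>2 \<le> (\<Sum>i\<in>A. 1\<^sup>2) * (\<Sum>i\<in>A. (sqrt (f i))\<^sup>2)"
    by (rule Cauchy_Schwarz_ineq_sum)
  with assms show "(\<Sum>i\<in>A. sqrt (f i))\<^sup>2 \<le> card A * (\<Sum>i\<in>A. f i)"
    by simp
qed

lemma tv_dist_empirical:
  assumes "length xs = n" "n \<ge> 1"
  shows "tv_dist p (empirical xs) = (\<Sum>a\<in>UNIV. \<bar>real (count_list xs a) - n * pmf p a\<bar>) / (2 * n)"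
proof -
  have "xs \<noteq> []"
    using assms by auto
  then have "pmf p a - pmf (empirical xs) a = - ((real (count_list xs a) - n * pmf p a) / n)" for a
    using assms by (simp add: pmf_empirical field_simps)
  then have "\<bar>pmf p a - pmf (empirical xs) a\<bar> = \<bar>real (count_list xs a) - n * pmf p a\<bar> / n" for a
    by simp
  then show ?thesis
    by (simp add: tv_dist_def sum_divide_distrib mult.commute)
qed

lemma expectation_tv_dist_empirical_le:
  fixes p :: "'a::finite pmf"
  assumes "n \<ge> 1"
  shows "measure_pmf.expectation (replicate_pmf n p) (\<lambda>xs. tv_dist p (empirical xs))
           \<le> sqrt (CARD('a) / (4 * real n))"
proof -
  have "measure_pmf.expectation (replicate_pmf n p) (\<lambda>xs. tv_dist p (empirical xs))
      = measure_pmf.expectation (replicate_pmf n p)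
          (\<lambda>xs. (\<Sum>a\<in>UNIV. \<bar>real (count_list xs a) - n * pmf p a\<bar>) / (2 * n))"
    using assms by (intro integral_cong_AE AE_pmfI) (auto simp: set_replicate_pmf tv_dist_empirical)
  also have "\<dots> = (\<Sum>a\<in>UNIV. measure_pmf.expectation (replicate_pmf n p)
                      (\<lambda>xs. \<bar>real (count_list xs a) - n * pmf p a\<bar>)) / (2 * n)"
    by (simp del: replicate_pmf.simps)
  also have "\<dots> \<le> (\<Sum>a\<in>UNIV. sqrt (n * pmf p a)) / (2 * n)"
    by (intro divide_right_mono sum_mono expectation_abs_count_deviation_le) simp
  also have "\<dots> \<le> sqrt (CARD('a) * n) / (2 * n)"
    using sum_sqrt_le_sqrt_card_mult_sum[of UNIV "\<lambda>a. n * pmf p a"]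
    by (intro divide_right_mono) (simp_all flip: sum_distrib_left)
  also have "\<dots> = sqrt (CARD('a) / (4 * real n))"
    using assms by (simp add: real_sqrt_divide real_sqrt_mult field_simps)
  finally show ?thesis .
qed

lemma expected_wasserstein_empirical_le:
  fixes P :: "'a::finite pmf"
  assumes "CARD('a) \<ge> 2" "0 \<le> \<delta>" "0 < r" "n \<ge> 1"
  shows "measure_pmf.expectation (replicate_pmf n P)
           (\<lambda>xs. wasserstein (hamming_metric \<delta>) r P (empirical xs) powr r)
         \<le> \<delta> powr r * sqrt ((real CARD('a) - 1) / n)"
proof -
  have "measure_pmf.expectation (replicate_pmf n P)
          (\<lambda>xs. wasserstein (hamming_metric \<delta>) r P (empirical xs) powr r)
      = \<delta> powr r * measure_pmf.expectation (replicate_pmf n P) (\<lambda>xs. tv_dist P (empirical xs))"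
    using assms by (simp add: wasserstein_hamming_powr del: replicate_pmf.simps)
  also have "\<dots> \<le> \<delta> powr r * sqrt (CARD('a) / (4 * real n))"
    using assms by (intro mult_left_mono expectation_tv_dist_empirical_le) simp_all
  also have "\<dots> \<le> \<delta> powr r * sqrt ((real CARD('a) - 1) / n)"
    using assms by (intro mult_left_mono real_sqrt_le_mono divide_right_mono) (simp_all add: field_simps)
  finally show ?thesis .
qed

section \<open>Assouad's lemma\<close>

lemma sum_min_ge_half_sq_sum_sqrt_mult:
  fixes a b :: "'a \<Rightarrow> real"
  assumes "\<And>x. x \<in> A \<Longrightarrow> 0 \<le> a x" "\<And>x. x \<in> A \<Longrightarrow> 0 \<le> b x" "sum a A = 1" "sum b A = 1"
  shows "(\<Sum>x\<in>A. sqrt (a x * b x))\<^sup>2 / 2 \<le> (\<Sum>x\<in>A. min (a x) (b x))"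
proof -
  have "sqrt (a x * b x) = sqrt (min (a x) (b x)) * sqrt (max (a x) (b x))" for x
    by (simp add: min_def max_def mult.commute flip: real_sqrt_mult)
  then have "(\<Sum>x\<in>A. sqrt (a x * b x))\<^sup>2
      \<le> (\<Sum>x\<in>A. (sqrt (min (a x) (b x)))\<^sup>2) * (\<Sum>x\<in>A. (sqrt (max (a x) (b x)))\<^sup>2)"
    by (simp only: Cauchy_Schwarz_ineq_sum)
  also have "\<dots> = (\<Sum>x\<in>A. min (a x) (b x)) * (\<Sum>x\<in>A. max (a x) (b x))"
    using assms(1,2) by (simp add: min_def max_def)
  also have "\<dots> \<le> (\<Sum>x\<in>A. min (a x) (b x)) * 2"
  proof (rule mult_left_mono)
    have "(\<Sum>x\<in>A. max (a x) (b x)) \<le> (\<Sum>x\<in>A. a x + b x)"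
      using assms(1,2) by (intro sum_mono) auto
    then show "(\<Sum>x\<in>A. max (a x) (b x)) \<le> 2"
      using assms(3,4) by (simp add: sum.distrib)
    show "0 \<le> (\<Sum>x\<in>A. min (a x) (b x))"
      using assms(1,2) by (intro sum_nonneg) auto
  qed
  finally show ?thesis by simp
qed

lemma sum_sqrt_pmf_replicate_pmf:
  fixes p q :: "'a::finite pmf"
  shows "(\<Sum>xs | length xs = n. sqrt (pmf (replicate_pmf n p) xs * pmf (replicate_pmf n q) xs))
           = (\<Sum>x\<in>UNIV. sqrt (pmf p x * pmf q x)) ^ n"
proof (induction n)
  case 0
  have "{xs :: 'a list. length xs = 0} = {[]}" by auto
  then show ?case by simp
next
  case (Suc n)
  let ?aff = "\<lambda>xs. sqrt (pmf (replicate_pmf n p) xs * pmf (replicate_pmf n q) xs)"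
  have "(\<Sum>xs | length xs = Suc n. sqrt (pmf (replicate_pmf (Suc n) p) xs * pmf (replicate_pmf (Suc n) q) xs))
      = (\<Sum>x\<in>UNIV. \<Sum>xs | length xs = n. sqrt (pmf p x * pmf q x) * ?aff xs)"
    by (simp add: sum_lists_length_Suc pmf_replicate_pmf_Cons real_sqrt_mult mult_ac
        del: replicate_pmf.simps)
  also have "\<dots> = (\<Sum>x\<in>UNIV. sqrt (pmf p x * pmf q x)) * (\<Sum>xs | length xs = n. ?aff xs)"
    by (rule sum_product[symmetric])
  finally show ?case
    using Suc by simp
qed

lemma sum_Pow_insert:
  assumes "finite A" "j \<notin> A"
  shows "(\<Sum>S\<in>Pow (insert j A). g S) = (\<Sum>S\<in>Pow A. g S + g (insert j S))"
proof -
  have "inj_on (insert j) (Pow A)"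
    using assms(2) by (auto simp: inj_on_def)
  moreover have "Pow A \<inter> insert j ` Pow A = {}"
    using assms(2) by auto
  ultimately show ?thesis
    using assms(1) by (simp add: Pow_insert sum.union_disjoint sum.reindex sum.distrib)
qed

lemma min_mult_add_le:
  fixes a b f g :: real
  assumes "0 \<le> a" "0 \<le> b" "0 \<le> f" "0 \<le> g"
  shows "min a b * (f + g) \<le> a * f + b * g"
  using assms by (simp add: distrib_left add_mono mult_right_mono)

lemma le_cam_two_point:
  fixes u v f g :: "'x \<Rightarrow> real"
  assumes "0 \<le> \<alpha>" "\<And>x. 0 \<le> u x" "\<And>x. 0 \<le> v x" "\<And>x. 0 \<le> f x" "\<And>x. 0 \<le> g x"
    and "\<And>x. \<alpha> \<le> f x + g x" and "\<beta> \<le> (\<Sum>x\<in>A. min (u x) (v x))"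
  shows "\<alpha> * \<beta> \<le> (\<Sum>x\<in>A. u x * f x + v x * g x)"
proof -
  have "\<alpha> * \<beta> \<le> \<alpha> * (\<Sum>x\<in>A. min (u x) (v x))"
    using assms(1,7) by (rule mult_left_mono[rotated])
  also have "\<dots> = (\<Sum>x\<in>A. min (u x) (v x) * \<alpha>)"
    by (simp add: sum_distrib_left mult.commute)
  also have "\<dots> \<le> (\<Sum>x\<in>A. min (u x) (v x) * (f x + g x))"
    using assms(2,3,6) by (intro sum_mono mult_left_mono) auto
  also have "\<dots> \<le> (\<Sum>x\<in>A. u x * f x + v x * g x)"
    using assms(2-5) by (intro sum_mono min_mult_add_le)
  finally show ?thesis .
qed

lemma assouad:
  fixes w :: "nat set \<Rightarrow> 'x \<Rightarrow> real" and F :: "nat \<Rightarrow> bool \<Rightarrow> 'x \<Rightarrow> real"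
  assumes "finite A" "0 \<le> \<alpha>"
    and w_nonneg: "\<And>S x. 0 \<le> w S x"
    and F_nonneg: "\<And>j s x. 0 \<le> F j s x"
    and F_separates: "\<And>j x. \<alpha> \<le> F j True x + F j False x"
    and overlap: "\<And>S j. S \<subseteq> {..<m} \<Longrightarrow> j < m \<Longrightarrow> j \<notin> S
                    \<Longrightarrow> \<beta> \<le> (\<Sum>x\<in>A. min (w S x) (w (insert j S) x))"
  shows "m * \<alpha> * \<beta> / 2 \<le> (\<Sum>S\<in>Pow {..<m}. \<Sum>x\<in>A. w S x * (\<Sum>j<m. F j (j \<in> S) x)) / 2 ^ m"
proof (cases "m = 0")
  case False
  define G where "G j S = (\<Sum>x\<in>A. w S x * F j (j \<in> S) x)" for j S
  have pair: "\<alpha> * \<beta> \<le> G j S + G j (insert j S)" if "S \<subseteq> {..<m}" "j < m" "j \<notin> S" for j S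
  proof -
    have "\<alpha> * \<beta> \<le> (\<Sum>x\<in>A. w S x * F j False x + w (insert j S) x * F j True x)"
      using assms(2) w_nonneg F_nonneg F_separates overlap[OF that]
      by (intro le_cam_two_point) (auto simp: add.commute)
    then show ?thesis
      using that by (simp add: G_def sum.distrib)
  qed
  have coordinate: "2 ^ (m - 1) * (\<alpha> * \<beta>) \<le> (\<Sum>S\<in>Pow {..<m}. G j S)" if "j < m" for j
  proof -
    have "(\<Sum>S\<in>Pow {..<m}. G j S) = (\<Sum>S\<in>Pow ({..<m} - {j}). G j S + G j (insert j S))"
      using that sum_Pow_insert[of "{..<m} - {j}" j "G j"] by (simp add: insert_absorb)
    also have "\<dots> \<ge> (\<Sum>S\<in>Pow ({..<m} - {j}). \<alpha> * \<beta>)"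
      using that by (intro sum_mono pair) auto
    also have "(\<Sum>S\<in>Pow ({..<m} - {j}). \<alpha> * \<beta>) = 2 ^ (m - 1) * (\<alpha> * \<beta>)"
      using that by (simp add: card_Pow)
    finally show ?thesis .
  qed
  have "(\<Sum>x\<in>A. w S x * (\<Sum>j<m. F j (j \<in> S) x)) = (\<Sum>j<m. G j S)" for S
    unfolding G_def by (simp add: sum_distrib_left) (rule sum.swap)
  then have "(\<Sum>S\<in>Pow {..<m}. \<Sum>x\<in>A. w S x * (\<Sum>j<m. F j (j \<in> S) x))
      = (\<Sum>S\<in>Pow {..<m}. \<Sum>j<m. G j S)"
    by simp
  also have "\<dots> = (\<Sum>j<m. \<Sum>S\<in>Pow {..<m}. G j S)"
    by (rule sum.swap)
  also have "\<dots> \<ge> (\<Sum>j<m. 2 ^ (m - 1) * (\<alpha> * \<beta>))"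
    by (intro sum_mono coordinate) simp
  finally have "m * 2 ^ (m - 1) * (\<alpha> * \<beta>) \<le> (\<Sum>S\<in>Pow {..<m}. \<Sum>x\<in>A. w S x * (\<Sum>j<m. F j (j \<in> S) x))"
    by (simp add: mult.assoc)
  moreover have "(2::real) ^ m = 2 * 2 ^ (m - 1)"
    using False by (simp flip: power_Suc)
  ultimately show ?thesis
    by (simp add: field_simps)
qed simp

section \<open>Minimax lower bound\<close>

definition to_index :: "'a::finite \<Rightarrow> nat" where
  "to_index = to_nat_on (UNIV :: 'a set)"

definition of_index :: "nat \<Rightarrow> 'a::finite" where
  "of_index = inv_into UNIV to_index"

lemma bij_betw_to_index: "bij_betw (to_index :: 'a::finite \<Rightarrow> nat) UNIV {..<CARD('a)}"
  unfolding to_index_def by (rule to_nat_on_finite) simp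

lemma to_index_of_index: "i < CARD('a) \<Longrightarrow> to_index (of_index i :: 'a::finite) = i"
  unfolding of_index_def by (rule bij_betw_inv_into_right[OF bij_betw_to_index]) simp

lemma sum_UNIV_of_index: "(\<Sum>x\<in>UNIV. f x) = (\<Sum>i<CARD('a). f (of_index i :: 'a::finite))"
  using sum.reindex_bij_betw[OF bij_betw_inv_into[OF bij_betw_to_index], of f]
  by (simp add: of_index_def)

lemma sum_lessThan_double:
  "(\<Sum>i<2 * m. g i) = (\<Sum>j<m. g (2 * j) + g (Suc (2 * j)))" for g :: "nat \<Rightarrow> 'b::comm_monoid_add"
  by (induction m) (simp_all add: add.assoc)

definition pair_mass :: "real \<Rightarrow> nat \<Rightarrow> bool \<Rightarrow> real" where
  "pair_mass \<epsilon> m s = (if s then 1 + \<epsilon> else 1 - \<epsilon>) / (2 * m)"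

lemma pair_mass_nonneg: "\<bar>\<epsilon>\<bar> \<le> 1 \<Longrightarrow> 0 \<le> pair_mass \<epsilon> m s"
  by (simp add: pair_mass_def)

lemma pair_mass_add_not: "m \<ge> 1 \<Longrightarrow> pair_mass \<epsilon> m s + pair_mass \<epsilon> m (\<not> s) = 1 / m"
  by (cases s) (simp_all add: pair_mass_def field_simps)

lemma pair_mass_mult_not: "pair_mass \<epsilon> m s * pair_mass \<epsilon> m (\<not> s) = (1 - \<epsilon>\<^sup>2) / (2 * m)\<^sup>2"
  by (cases s) (simp_all add: pair_mass_def power2_eq_square algebra_simps)

text \<open>The hypercube of distributions: the first \<open>2 m\<close> points are grouped in pairs, and bit \<open>j\<close>
  of \<open>S\<close> decides which point of pair \<open>j\<close> carries the mass \<open>(1 + \<epsilon>) / (2 m)\<close>.\<close>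
definition perturbed_weight :: "real \<Rightarrow> nat \<Rightarrow> nat set \<Rightarrow> nat \<Rightarrow> real" where
  "perturbed_weight \<epsilon> m S i = (if i < 2 * m then pair_mass \<epsilon> m ((i div 2 \<in> S) = even i) else 0)"

lemma perturbed_weight_pair:
  assumes "j < m"
  shows "perturbed_weight \<epsilon> m S (2 * j) = pair_mass \<epsilon> m (j \<in> S)"
    and "perturbed_weight \<epsilon> m S (Suc (2 * j)) = pair_mass \<epsilon> m (j \<notin> S)"
  using assms by (simp_all add: perturbed_weight_def)

lemma sum_perturbed_weight:
  assumes "m \<ge> 1" "2 * m \<le> K"
  shows "(\<Sum>i<K. perturbed_weight \<epsilon> m S i) = 1"
proof -
  have "(\<Sum>i<K. perturbed_weight \<epsilon> m S i) = (\<Sum>i<2 * m. perturbed_weight \<epsilon> m S i)"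
    using assms by (intro sum.mono_neutral_right) (auto simp: perturbed_weight_def)
  also have "\<dots> = (\<Sum>j<m. 1 / m)"
    using assms by (simp add: sum_lessThan_double perturbed_weight_pair pair_mass_add_not)
  finally show ?thesis
    using assms by simp
qed

definition perturbed_pmf :: "real \<Rightarrow> nat \<Rightarrow> nat set \<Rightarrow> 'a::finite pmf" where
  "perturbed_pmf \<epsilon> m S = embed_pmf (\<lambda>x. perturbed_weight \<epsilon> m S (to_index x))"

lemma pmf_perturbed_pmf:
  assumes "m \<ge> 1" "2 * m \<le> CARD('a)" "\<bar>\<epsilon>\<bar> \<le> 1"
  shows "pmf (perturbed_pmf \<epsilon> m S :: 'a::finite pmf) x = perturbed_weight \<epsilon> m S (to_index x)"
  unfolding perturbed_pmf_def
proof (rule pmf_embed_pmf)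
  show nonneg: "0 \<le> perturbed_weight \<epsilon> m S (to_index x)" for x :: 'a
    using assms by (simp add: perturbed_weight_def pair_mass_nonneg)
  have "(\<Sum>x\<in>UNIV. perturbed_weight \<epsilon> m S (to_index (x :: 'a))) = 1"
    using assms by (simp add: sum_UNIV_of_index to_index_of_index sum_perturbed_weight)
  then show "(\<integral>\<^sup>+ x. ennreal (perturbed_weight \<epsilon> m S (to_index x)) \<partial>count_space (UNIV :: 'a set)) = 1"
    using nonneg by (simp add: nn_integral_count_space_finite)
qed

definition pair_loss :: "real \<Rightarrow> nat \<Rightarrow> nat \<Rightarrow> bool \<Rightarrow> 'a::finite pmf \<Rightarrow> real" where
  "pair_loss \<epsilon> m j s Q = (\<bar>pair_mass \<epsilon> m s - pmf Q (of_index (2 * j))\<bar>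
                          + \<bar>pair_mass \<epsilon> m (\<not> s) - pmf Q (of_index (Suc (2 * j)))\<bar>) / 2"

lemma pair_loss_nonneg: "0 \<le> pair_loss \<epsilon> m j s Q"
  by (simp add: pair_loss_def)

lemma integrable_pair_loss: "integrable (measure_pmf M) (pair_loss \<epsilon> m j s)"
proof (rule measure_pmf.integrable_const_bound)
  have "pair_loss \<epsilon> m j s Q \<le> (\<bar>pair_mass \<epsilon> m s\<bar> + \<bar>pair_mass \<epsilon> m (\<not> s)\<bar> + 2) / 2" for Q :: "'a pmf"
  proof -
    have "\<bar>b - pmf Q x\<bar> \<le> \<bar>b\<bar> + 1" for b x
      using abs_triangle_ineq4[of b "pmf Q x"] pmf_le_1[of Q x] by simp
    from this[of "pair_mass \<epsilon> m s" "of_index (2 * j)"] this[of "pair_mass \<epsilon> m (\<not> s)" "of_index (Suc (2 * j))"]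
    show ?thesis
      unfolding pair_loss_def by (intro divide_right_mono) auto
  qed
  then show "AE Q in M. norm (pair_loss \<epsilon> m j s Q) \<le> (\<bar>pair_mass \<epsilon> m s\<bar> + \<bar>pair_mass \<epsilon> m (\<not> s)\<bar> + 2) / 2"
    by (simp add: pair_loss_nonneg)
qed simp

lemma pair_loss_True_add_False:
  assumes "m \<ge> 1" "0 \<le> \<epsilon>"
  shows "\<epsilon> / m \<le> pair_loss \<epsilon> m j True Q + pair_loss \<epsilon> m j False Q"
proof -
  have triangle: "t - f \<le> \<bar>t - q\<bar> + \<bar>f - q\<bar>" for t f q :: real
    by arith
  have "t - f \<le> (\<bar>t - q\<bar> + \<bar>f - q'\<bar>) / 2 + (\<bar>f - q\<bar> + \<bar>t - q'\<bar>) / 2" for t f q q' :: real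
    using triangle[of t f q] triangle[of t f q'] by (simp add: field_simps)
  moreover have "pair_mass \<epsilon> m True - pair_mass \<epsilon> m False = \<epsilon> / m"
    using assms by (simp add: pair_mass_def field_simps)
  ultimately have "\<epsilon> / m \<le> (\<bar>pair_mass \<epsilon> m True - pmf Q (of_index (2 * j))\<bar> + \<bar>pair_mass \<epsilon> m False - pmf Q (of_index (Suc (2 * j)))\<bar>) / 2
                     + (\<bar>pair_mass \<epsilon> m False - pmf Q (of_index (2 * j))\<bar> + \<bar>pair_mass \<epsilon> m True - pmf Q (of_index (Suc (2 * j)))\<bar>) / 2"
    by metis
  then show ?thesis
    by (simp add: pair_loss_def)
qed

lemma tv_dist_perturbed_pmf_ge:
  assumes "m \<ge> 1" "2 * m \<le> CARD('a)" "\<bar>\<epsilon>\<bar> \<le> 1"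
  shows "(\<Sum>j<m. pair_loss \<epsilon> m j (j \<in> S) Q) \<le> tv_dist (perturbed_pmf \<epsilon> m S :: 'a::finite pmf) Q"
proof -
  let ?d = "\<lambda>i. \<bar>perturbed_weight \<epsilon> m S i - pmf Q (of_index i)\<bar>"
  have "(\<Sum>j<m. pair_loss \<epsilon> m j (j \<in> S) Q) = (\<Sum>i<2 * m. ?d i) / 2"
    by (simp add: sum_lessThan_double perturbed_weight_pair pair_loss_def sum_divide_distrib)
  also have "\<dots> \<le> (\<Sum>i<CARD('a). ?d i) / 2"
    using assms(2) by (intro divide_right_mono sum_mono2) auto
  also have "\<dots> = tv_dist (perturbed_pmf \<epsilon> m S) Q"
    using assms by (simp add: tv_dist_def sum_UNIV_of_index pmf_perturbed_pmf to_index_of_index)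
  finally show ?thesis .
qed

lemma sqrt_perturbed_weight_insert_ge:
  assumes "m \<ge> 1" "\<bar>\<epsilon>\<bar> \<le> 1" "j < m" "j \<notin> S"
  shows "(perturbed_weight \<epsilon> m S i + perturbed_weight \<epsilon> m (insert j S) i) / 2
           - (if i \<in> {2 * j, Suc (2 * j)} then \<epsilon>\<^sup>2 / (2 * m) else 0)
         \<le> sqrt (perturbed_weight \<epsilon> m S i * perturbed_weight \<epsilon> m (insert j S) i)"
    (is "(?a + ?b) / 2 - _ \<le> sqrt (?a * ?b)")
proof (cases "i \<in> {2 * j, Suc (2 * j)}")
  case True
  with assms(3,4) have product: "?a * ?b = (1 - \<epsilon>\<^sup>2) / (2 * m)\<^sup>2" and sum: "?a + ?b = 1 / m"
    using pair_mass_mult_not[of \<epsilon> m False] pair_mass_mult_not[of \<epsilon> m True]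
      pair_mass_add_not[OF assms(1), of \<epsilon> False] pair_mass_add_not[OF assms(1), of \<epsilon> True]
    by (auto simp: perturbed_weight_pair)
  have "0 \<le> 1 - \<epsilon>\<^sup>2" "1 - \<epsilon>\<^sup>2 \<le> 1"
    using assms(2) by (simp_all add: abs_square_le_1)
  then have "1 - \<epsilon>\<^sup>2 \<le> sqrt (1 - \<epsilon>\<^sup>2)"
    by (intro real_le_rsqrt) (simp add: power2_eq_square mult_left_le)
  then have "(1 - \<epsilon>\<^sup>2) / (2 * m) \<le> sqrt (1 - \<epsilon>\<^sup>2) / (2 * m)"
    by (simp add: divide_right_mono)
  moreover have "sqrt (?a * ?b) = sqrt (1 - \<epsilon>\<^sup>2) / (2 * m)"
    using product \<open>0 \<le> 1 - \<epsilon>\<^sup>2\<close> by (intro real_sqrt_unique) (simp_all add: power_divide)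
  moreover have "(?a + ?b) / 2 - \<epsilon>\<^sup>2 / (2 * m) = (1 - \<epsilon>\<^sup>2) / (2 * m)"
    unfolding sum using assms(1) by (simp add: field_simps)
  ultimately show ?thesis
    using True by simp
next
  case False
  then have "i div 2 \<noteq> j"
    by auto
  then have "?b = ?a"
    by (simp add: perturbed_weight_def)
  then show ?thesis
    using False assms(2) by (simp add: perturbed_weight_def pair_mass_nonneg)
qed

lemma sum_sqrt_pmf_perturbed_pmf_insert:
  assumes "m \<ge> 1" "2 * m \<le> CARD('a)" "\<bar>\<epsilon>\<bar> \<le> 1" "j < m" "j \<notin> S"
  shows "1 - \<epsilon>\<^sup>2 / m \<le> (\<Sum>x\<in>UNIV. sqrt (pmf (perturbed_pmf \<epsilon> m S :: 'a::finite pmf) x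
                                        * pmf (perturbed_pmf \<epsilon> m (insert j S) :: 'a pmf) x))"
proof -
  let ?a = "perturbed_weight \<epsilon> m S" and ?b = "perturbed_weight \<epsilon> m (insert j S)"
  let ?loss = "\<lambda>i. if i \<in> {2 * j, Suc (2 * j)} then \<epsilon>\<^sup>2 / (2 * m) else 0"
  have "(\<Sum>i<CARD('a). ?loss i) = (\<Sum>i\<in>{2 * j, Suc (2 * j)}. ?loss i)"
    using assms(2,4) by (intro sum.mono_neutral_right) auto
  also have "\<dots> = \<epsilon>\<^sup>2 / m"
    by simp
  finally have "1 - \<epsilon>\<^sup>2 / m = (\<Sum>i<CARD('a). (?a i + ?b i) / 2 - ?loss i)"
    using assms(1,2) by (simp add: sum_subtractf sum.distrib sum_perturbed_weight flip: sum_divide_distrib)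
  also have "\<dots> \<le> (\<Sum>i<CARD('a). sqrt (?a i * ?b i))"
    using assms(1,3-5) by (intro sum_mono sqrt_perturbed_weight_insert_ge)
  also have "\<dots> = (\<Sum>x\<in>UNIV. sqrt (pmf (perturbed_pmf \<epsilon> m S :: 'a pmf) x
                                   * pmf (perturbed_pmf \<epsilon> m (insert j S) :: 'a pmf) x))"
    using assms(1-3) by (simp add: sum_UNIV_of_index pmf_perturbed_pmf to_index_of_index)
  finally show ?thesis .
qed

lemma sum_pmf_replicate_pmf: "(\<Sum>xs | length xs = n. pmf (replicate_pmf n p) xs) = 1"
  for p :: "'a::finite pmf"
  using expectation_replicate_pmf_finite[of n p "\<lambda>_. 1"] by simp

lemma overlap_replicate_perturbed_pmf:
  assumes "m \<ge> 1" "2 * m \<le> CARD('a)" "\<bar>\<epsilon>\<bar> \<le> 1" "j < m" "j \<notin> S" "n * \<epsilon>\<^sup>2 \<le> m"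
  shows "(1 - n * \<epsilon>\<^sup>2 / m)\<^sup>2 / 2
           \<le> (\<Sum>xs | length xs = n. min (pmf (replicate_pmf n (perturbed_pmf \<epsilon> m S :: 'a::finite pmf)) xs)
                                          (pmf (replicate_pmf n (perturbed_pmf \<epsilon> m (insert j S))) xs))"
proof -
  let ?p = "perturbed_pmf \<epsilon> m S :: 'a pmf" and ?q = "perturbed_pmf \<epsilon> m (insert j S) :: 'a pmf"
  have "\<epsilon>\<^sup>2 \<le> 1"
    using assms(3) by (simp add: abs_square_le_1)
  with assms(1) have "\<epsilon>\<^sup>2 / m \<le> 1"
    by (simp add: field_simps)
  then have "1 - n * \<epsilon>\<^sup>2 / m \<le> (1 - \<epsilon>\<^sup>2 / m) ^ n"
    using Bernoulli_inequality[of "- (\<epsilon>\<^sup>2 / m)" n] by simp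
  also have "\<dots> \<le> (\<Sum>x\<in>UNIV. sqrt (pmf ?p x * pmf ?q x)) ^ n"
    using \<open>\<epsilon>\<^sup>2 / m \<le> 1\<close> by (intro power_mono sum_sqrt_pmf_perturbed_pmf_insert assms(1-5)) simp
  also have "\<dots> = (\<Sum>xs | length xs = n. sqrt (pmf (replicate_pmf n ?p) xs * pmf (replicate_pmf n ?q) xs))"
    by (rule sum_sqrt_pmf_replicate_pmf[symmetric])
  finally have "(1 - n * \<epsilon>\<^sup>2 / m)\<^sup>2
      \<le> (\<Sum>xs | length xs = n. sqrt (pmf (replicate_pmf n ?p) xs * pmf (replicate_pmf n ?q) xs))\<^sup>2"
    using assms(1,6) by (intro power_mono) (simp_all add: field_simps)
  also have "\<dots> / 2 \<le> (\<Sum>xs | length xs = n. min (pmf (replicate_pmf n ?p) xs) (pmf (replicate_pmf n ?q) xs))"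
    by (rule sum_min_ge_half_sq_sum_sqrt_mult) (simp_all add: sum_pmf_replicate_pmf)
  finally show ?thesis
    by (simp add: divide_right_mono)
qed

lemma integrable_tv_dist: "integrable (measure_pmf M) (tv_dist P)"
  by (rule measure_pmf.integrable_const_bound[where B = 1])
     (simp_all add: tv_dist_nonneg tv_dist_le_1)

lemma risk_hamming:
  fixes P :: "'a::finite pmf"
  assumes "0 \<le> \<delta>" "0 < r"
  shows "risk (hamming_metric \<delta>) r n est P
           = \<delta> powr r * measure_pmf.expectation (replicate_pmf n P)
                           (\<lambda>xs. measure_pmf.expectation (est xs) (tv_dist P))"
  using assms by (simp add: risk_def wasserstein_hamming_powr del: replicate_pmf.simps)

lemma risk_hamming_le:
  fixes P :: "'a::finite pmf"
  assumes "0 \<le> \<delta>" "0 < r"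
  shows "risk (hamming_metric \<delta>) r n est P \<le> \<delta> powr r"
proof -
  have "measure_pmf.expectation (est xs) (tv_dist P) \<le> 1" for xs
    by (intro measure_pmf.integral_le_const integrable_tv_dist) (simp add: tv_dist_le_1)
  then have "measure_pmf.expectation (replicate_pmf n P) (\<lambda>xs. measure_pmf.expectation (est xs) (tv_dist P)) \<le> 1"
    by (intro measure_pmf.integral_le_const) (simp_all del: replicate_pmf.simps)
  then show ?thesis
    using assms by (simp add: risk_hamming mult_left_le)
qed

lemma expectation_pair_loss_le_tv_dist:
  assumes "m \<ge> 1" "2 * m \<le> CARD('a)" "\<bar>\<epsilon>\<bar> \<le> 1"
  shows "(\<Sum>j<m. measure_pmf.expectation M (pair_loss \<epsilon> m j (j \<in> S)))
           \<le> measure_pmf.expectation M (tv_dist (perturbed_pmf \<epsilon> m S :: 'a::finite pmf))"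
proof -
  have "(\<Sum>j<m. measure_pmf.expectation M (pair_loss \<epsilon> m j (j \<in> S)))
      = measure_pmf.expectation M (\<lambda>Q. \<Sum>j<m. pair_loss \<epsilon> m j (j \<in> S) Q)"
    by (rule Bochner_Integration.integral_sum[symmetric]) (rule integrable_pair_loss)
  also have "\<dots> \<le> measure_pmf.expectation M (tv_dist (perturbed_pmf \<epsilon> m S))"
    by (intro integral_mono Bochner_Integration.integrable_sum integrable_pair_loss
        integrable_tv_dist tv_dist_perturbed_pmf_ge assms)
  finally show ?thesis .
qed

lemma expectation_pair_loss_True_add_False:
  assumes "m \<ge> 1" "0 \<le> \<epsilon>"
  shows "\<epsilon> / m \<le> measure_pmf.expectation M (pair_loss \<epsilon> m j True)
                 + measure_pmf.expectation M (pair_loss \<epsilon> m j False)"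
proof -
  have "\<epsilon> / m \<le> measure_pmf.expectation M (\<lambda>Q. pair_loss \<epsilon> m j True Q + pair_loss \<epsilon> m j False Q)"
    by (intro measure_pmf.integral_ge_const Bochner_Integration.integrable_add integrable_pair_loss
        AE_I2 pair_loss_True_add_False assms)
  also have "\<dots> = measure_pmf.expectation M (pair_loss \<epsilon> m j True)
                 + measure_pmf.expectation M (pair_loss \<epsilon> m j False)"
    by (intro Bochner_Integration.integral_add integrable_pair_loss)
  finally show ?thesis .
qed

lemma risk_perturbed_pmf_ge:
  fixes est :: "'a::finite list \<Rightarrow> 'a pmf pmf"
  assumes "m \<ge> 1" "2 * m \<le> CARD('a)" "\<bar>\<epsilon>\<bar> \<le> 1" "0 \<le> \<delta>" "0 < r"
  shows "\<delta> powr r * (\<Sum>xs | length xs = n. pmf (replicate_pmf n (perturbed_pmf \<epsilon> m S)) xs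
            * (\<Sum>j<m. measure_pmf.expectation (est xs) (pair_loss \<epsilon> m j (j \<in> S))))
         \<le> risk (hamming_metric \<delta>) r n est (perturbed_pmf \<epsilon> m S)"
  using assms expectation_pair_loss_le_tv_dist[OF assms(1-3)]
  by (auto simp: risk_hamming expectation_replicate_pmf_finite
      intro!: mult_left_mono sum_mono simp del: replicate_pmf.simps)

lemma sum_le_card_mult_SUP:
  fixes f :: "'b \<Rightarrow> real"
  assumes "bdd_above (range f)"
  shows "(\<Sum>x\<in>A. f (g x)) \<le> card A * (SUP y. f y)"
proof -
  have "(\<Sum>x\<in>A. f (g x)) \<le> (\<Sum>x\<in>A. SUP y. f y)"
    using assms by (intro sum_mono cSUP_upper) simp_all
  then show ?thesis
    by simp
qed

text \<open>Assouad's lemma on the hypercube \<open>perturbed_pmf \<epsilon> m S\<close>, \<open>S \<subseteq> {..<m}\<close>: the choice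
  \<open>\<epsilon>\<^sup>2 = m / (16 n)\<close> makes the samples from neighbouring vertices overlap by at least
  \<open>(15/16)\<^sup>2 / 2\<close>.\<close>
lemma minimax_risk_lower_bound:
  fixes est :: "'a::finite list \<Rightarrow> 'a pmf pmf"
  assumes "CARD('a) \<ge> 2" "real CARD('a) \<le> 32 * n" "0 \<le> \<delta>" "0 < r" "n \<ge> 1"
  shows "\<delta> powr r * (sqrt (real (CARD('a) div 2) / (16 * real n)) * (225 / 1024))
           \<le> (SUP P. risk (hamming_metric \<delta>) r n est P)"
proof -
  define m where "m = CARD('a) div 2"
  define \<epsilon> where "\<epsilon> = sqrt (m / (16 * real n))"
  have m: "m \<ge> 1" "2 * m \<le> CARD('a)"
    using assms(1) by (auto simp: m_def)
  have "m \<le> 16 * n"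
    using assms(2) m(2) by linarith
  then have \<epsilon>: "0 \<le> \<epsilon>" "\<bar>\<epsilon>\<bar> \<le> 1" "n * \<epsilon>\<^sup>2 \<le> m" "n * \<epsilon>\<^sup>2 / m = 1 / 16"
    using assms(5) m(1) by (simp_all add: \<epsilon>_def)
  let ?P = "\<lambda>S. perturbed_pmf \<epsilon> m S :: 'a pmf"
  let ?loss = "\<lambda>S xs. \<Sum>j<m. measure_pmf.expectation (est xs) (pair_loss \<epsilon> m j (j \<in> S))"
  let ?risk = "\<lambda>P. risk (hamming_metric \<delta>) r n est P"
  have "m * (\<epsilon> / m) * (225 / 512) / 2
      \<le> (\<Sum>S\<in>Pow {..<m}. \<Sum>xs | length xs = n. pmf (replicate_pmf n (?P S)) xs * ?loss S xs) / 2 ^ m"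
  proof (rule assouad)
    show "225 / 512 \<le> (\<Sum>xs | length xs = n. min (pmf (replicate_pmf n (?P S)) xs)
                                               (pmf (replicate_pmf n (?P (insert j S))) xs))"
      if "j < m" "j \<notin> S" for S j
      using overlap_replicate_perturbed_pmf[OF m \<epsilon>(2) that \<epsilon>(3), unfolded \<epsilon>(4)]
      by (simp add: power2_eq_square)
  qed (use \<epsilon>(1) m in \<open>simp_all add: finite_lists_length pair_loss_nonneg expectation_pair_loss_True_add_False\<close>)
  then have "\<delta> powr r * (m * (\<epsilon> / m) * (225 / 512) / 2)
      \<le> \<delta> powr r * ((\<Sum>S\<in>Pow {..<m}. \<Sum>xs | length xs = n. pmf (replicate_pmf n (?P S)) xs * ?loss S xs) / 2 ^ m)"
    by (rule mult_left_mono) simp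
  also have "\<dots> = (\<Sum>S\<in>Pow {..<m}. \<delta> powr r * (\<Sum>xs | length xs = n. pmf (replicate_pmf n (?P S)) xs * ?loss S xs)) / 2 ^ m"
    by (simp add: sum_distrib_left)
  also have "\<dots> \<le> (\<Sum>S\<in>Pow {..<m}. ?risk (?P S)) / 2 ^ m"
    using m \<epsilon>(2) assms(3,4) by (intro divide_right_mono sum_mono risk_perturbed_pmf_ge) simp_all
  also have "\<dots> \<le> (SUP P. ?risk P)"
  proof -
    have "bdd_above (range ?risk)"
      using risk_hamming_le[OF assms(3,4)] by (intro bdd_aboveI2)
    from sum_le_card_mult_SUP[OF this, where A = "Pow {..<m}" and g = ?P]
    show ?thesis
      by (simp add: card_Pow pos_divide_le_eq mult.commute)
  qed
  finally show ?thesis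
    using m(1) by (simp add: \<epsilon>_def m_def)
qed

lemma minimax_constant_le:
  fixes k n :: nat
  assumes "r \<ge> 1" "k \<ge> 2" "n \<ge> 1"
  shows "3 * ln 2 / 2 powr (r + 12) * sqrt ((real k - 1) / n)
           \<le> sqrt (real (k div 2) / (16 * real n)) * (225 / 1024)"
proof -
  have "(2::real) powr 13 \<le> 2 powr (r + 12)"
    using assms(1) by (intro powr_mono) auto
  then have "3 * ln 2 / 2 powr (r + 12) \<le> 3 / (2::real) powr 13"
    using ln_2_less_1 by (intro frac_le) auto
  also have "\<dots> = 3 / 8192"
    by (simp add: powr_realpow)
  finally have c_le: "3 * ln 2 / 2 powr (r + 12) \<le> 3 / (8192::real)" .
  have "real k - 1 \<le> 2 * real (k div 2)"
    by linarith
  then have "(real k - 1) / n \<le> 8\<^sup>2 * (real (k div 2) / (16 * real n))"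
    by (simp add: divide_right_mono)
  then have "sqrt ((real k - 1) / n) \<le> 8 * sqrt (real (k div 2) / (16 * real n))"
    by (metis real_sqrt_le_mono real_sqrt_mult real_sqrt_abs abs_numeral)
  then have "3 * ln 2 / 2 powr (r + 12) * sqrt ((real k - 1) / n)
      \<le> 3 / 8192 * (8 * sqrt (real (k div 2) / (16 * real n)))"
    using c_le assms(2) by (intro mult_mono) simp_all
  also have "\<dots> \<le> sqrt (real (k div 2) / (16 * real n)) * (225 / 1024)"
    by simp
  finally show ?thesis .
qed

theorem mainTheorem8:
  fixes \<delta> r :: real and n :: nat
  assumes card: "CARD('a::finite) \<ge> 2"
    and delta: "\<delta> > 0" and r: "r \<ge> 1" and n: "n \<ge> 1"
  shows "(\<forall>P :: 'a pmf.
            measure_pmf.expectation (replicate_pmf n P)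
              (\<lambda>xs. wasserstein (hamming_metric \<delta>) r P (empirical xs) powr r)
            \<le> \<delta> powr r * sqrt ((real CARD('a) - 1) / real n))
       \<and> (real CARD('a) \<le> 32 * real n \<longrightarrow>
            (INF est :: 'a list \<Rightarrow> 'a pmf pmf. SUP P :: 'a pmf. risk (hamming_metric \<delta>) r n est P)
            \<ge> (3 * ln 2 / 2 powr (r + 12)) * \<delta> powr r * sqrt ((real CARD('a) - 1) / real n))"
proof (intro conjI allI impI)
  show "measure_pmf.expectation (replicate_pmf n P)
          (\<lambda>xs. wasserstein (hamming_metric \<delta>) r P (empirical xs) powr r)
        \<le> \<delta> powr r * sqrt ((real CARD('a) - 1) / real n)" for P :: "'a pmf"
    using expected_wasserstein_empirical_le[OF card] delta r n by simp
next
  assume large_n: "real CARD('a) \<le> 32 * real n"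
  show "3 * ln 2 / 2 powr (r + 12) * \<delta> powr r * sqrt ((real CARD('a) - 1) / real n)
      \<le> (INF est :: 'a list \<Rightarrow> 'a pmf pmf. SUP P. risk (hamming_metric \<delta>) r n est P)"
  proof (rule cINF_greatest)
    fix est :: "'a list \<Rightarrow> 'a pmf pmf"
    have "3 * ln 2 / 2 powr (r + 12) * \<delta> powr r * sqrt ((real CARD('a) - 1) / real n)
        = \<delta> powr r * (3 * ln 2 / 2 powr (r + 12) * sqrt ((real CARD('a) - 1) / real n))"
      by (simp only: mult_ac)
    also have "\<dots> \<le> \<delta> powr r * (sqrt (real (CARD('a) div 2) / (16 * real n)) * (225 / 1024))"
      by (intro mult_left_mono minimax_constant_le r card n) simp
    also have "\<dots> \<le> (SUP P. risk (hamming_metric \<delta>) r n est P)"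
      using card large_n delta r n by (intro minimax_risk_lower_bound) simp_all
    finally show "3 * ln 2 / 2 powr (r + 12) * \<delta> powr r * sqrt ((real CARD('a) - 1) / real n)
        \<le> (SUP P. risk (hamming_metric \<delta>) r n est P)" .
  qed simp
qed

end
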